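(* Let $\alpha_1\in\mathbb{R}$ with $\sin\alpha_1\neq 0$, and consider the system on the cylinder $\{(\theta,\tilde\rho):\theta\in\mathbb{R}/2\pi\mathbb{Z},\ \tilde\rho>0\}$ \[ \theta' = \frac{1}{\tilde\rho}\bigl(1+\sin\theta\bigr)-2\sin\alpha_1,\qquad \tilde\rho' = -\cos\theta . \] Then every solution trajectory of this system (a) has the conserved quantity $E(\theta,\tilde\rho)=\tilde\rho\,(1+\sin\theta)-\tilde\rho^{2}\sin\alpha_1$, and (b) is a periodic orbit.
   Context: This planar system describes the relative state of a single "branch" agent that pursues agent 1 of a cycle of constant-bearing pursuit agents moving on a circling equilibrium, when the branch agent uses constant-bearing angle $\pi/2$; $\theta=\theta_{1n}$ is an angle (taken modulo $2\pi$), $\tilde\rho=\tilde\rho_{n1}$ a normalized distance, and the prime denotes differentiation with respect to a rescaled time $\tau$. *)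

theory Defs
  imports Complex_Main
begin

text \<open>A solution trajectory of the branch-agent system on the cylinder, with theta
  represented by a real lift (angle modulo 2 pi) and rho > 0, defined for all times tau.\<close>
definition branch_solution :: "real \<Rightarrow> (real \<Rightarrow> real) \<Rightarrow> (real \<Rightarrow> real) \<Rightarrow> bool" where
  "branch_solution \<alpha> \<theta> \<rho> \<longleftrightarrow>
     (\<forall>t. \<rho> t > 0) \<and>
     (\<forall>t. (\<theta> has_real_derivative ((1 + sin (\<theta> t)) / \<rho> t - 2 * sin \<alpha>)) (at t)) \<and>
     (\<forall>t. (\<rho> has_real_derivative (- cos (\<theta> t))) (at t))"

definition branch_energy :: "real \<Rightarrow> real \<Rightarrow> real \<Rightarrow> real" where
  "branch_energy \<alpha> th r = r * (1 + sin th) - r\<^sup>2 * sin \<alpha>"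

text \<open>Periodic orbit on the cylinder R/2piZ x (0,oo): after some period T > 0 the
  state returns, theta up to a multiple of 2 pi (equilibria count as well).\<close>
definition periodic_on_cylinder :: "(real \<Rightarrow> real) \<Rightarrow> (real \<Rightarrow> real) \<Rightarrow> bool" where
  "periodic_on_cylinder \<theta> \<rho> \<longleftrightarrow>
     (\<exists>T>0. \<exists>k::int. \<forall>t. \<rho> (t + T) = \<rho> t \<and> \<theta> (t + T) = \<theta> t + 2 * pi * of_int k)"

end

theory Submission
  imports Defs
begin

text \<open>
  Write \<open>s = sin \<alpha>\<close>. The energy has zero derivative along solutions, and with \<open>x = s \<rho>\<close>
  one has \<open>s E = x (1 + sin \<theta>) - x\<^sup>2 \<le> 1\<close>, while \<open>\<theta>' = E / \<rho>\<^sup>2 - s\<close>.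
  If \<open>s E \<le> 0\<close> then \<open>\<theta>'\<close> has the sign of \<open>-s\<close> and \<open>|\<theta>'| \<ge> |s|\<close>, so \<theta> gains \<open>\<plusminus>2\<pi>\<close> in
  finite time. Then \<open>sin \<theta>\<close> is back, and the old and the new \<rho> are positive roots of the
  energy quadratic \<open>s \<rho>\<^sup>2 - (1 + sin \<theta>) \<rho> + E\<close>, whose roots have product \<open>E / s \<le> 0\<close>;
  so they coincide. If \<open>s E = 1\<close> the solution is the equilibrium \<open>sin \<theta> = 1\<close>, \<open>s \<rho> = 1\<close>.
  If \<open>0 < s E < 1\<close> the orbit circles the equilibrium: \<open>sin \<theta>\<close> stays away from \<open>-1\<close>, so
  a lift of \<theta> stays in \<open>(-\<pi>/2, 3\<pi>/2)\<close>, and \<rho> keeps crossing the level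
  \<open>\<rho>\<^sub>* = sqrt (E / s)\<close> on which \<open>\<theta>' = 0\<close>. On that level the energy determines \<open>sin \<theta>\<close>,
  and an upward crossing needs \<open>cos \<theta> \<le> 0\<close>, so any two upward crossings happen in the
  same state. Uniqueness of solutions, by a Gronwall estimate, turns every such return
  into periodicity.
\<close>

section \<open>Real analysis\<close>

lemma increment_ge_if_deriv_ge:
  fixes f f' :: "real \<Rightarrow> real"
  assumes "a \<le> b"
    and deriv: "\<And>x. a \<le> x \<Longrightarrow> x \<le> b \<Longrightarrow> DERIV f x :> f' x"
    and bound: "\<And>x. a \<le> x \<Longrightarrow> x \<le> b \<Longrightarrow> k \<le> f' x"
  shows "f a + k * (b - a) \<le> f b"
proof (cases "a = b")
  case False
  then obtain z where z: "a < z" "z < b" "f b - f a = (b - a) * f' z"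
    using MVT2[OF _ deriv] \<open>a \<le> b\<close> by (metis order_le_less)
  have "k * (b - a) \<le> f' z * (b - a)"
    using bound[of z] z \<open>a \<le> b\<close> by (intro mult_right_mono) auto
  with z show ?thesis by (simp add: algebra_simps)
qed simp

lemma increment_le_if_deriv_le:
  fixes f f' :: "real \<Rightarrow> real"
  assumes "a \<le> b"
    and "\<And>x. a \<le> x \<Longrightarrow> x \<le> b \<Longrightarrow> DERIV f x :> f' x"
    and "\<And>x. a \<le> x \<Longrightarrow> x \<le> b \<Longrightarrow> f' x \<le> k"
  shows "f b \<le> f a + k * (b - a)"
proof -
  have "- f a + (- k) * (b - a) \<le> - f b"
    by (rule increment_ge_if_deriv_ge[where f' = "\<lambda>x. - f' x"]) (use assms in \<open>auto intro: DERIV_minus\<close>)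
  then show ?thesis by simp
qed

lemma exists_increment_if_deriv_ge:
  fixes f f' :: "real \<Rightarrow> real"
  assumes deriv: "\<And>x. DERIV f x :> f' x" and bound: "\<And>x. c \<le> f' x"
    and "0 < c" "0 < d"
  shows "\<exists>T>0. f T = f 0 + d"
proof -
  have "f 0 + c * (d / c - 0) \<le> f (d / c)"
    using assms by (intro increment_ge_if_deriv_ge[OF _ deriv bound]) auto
  then have "f 0 + d \<le> f (d / c)"
    using \<open>0 < c\<close> by simp
  moreover have "continuous_on {0..d / c} f"
    using deriv by (meson DERIV_isCont continuous_at_imp_continuous_on)
  ultimately obtain T where "0 \<le> T" "f T = f 0 + d"
    using IVT'[of f 0 "f 0 + d" "d / c"] assms by auto
  with \<open>0 < d\<close> show ?thesis
    by (metis add_cancel_left_right less_eq_real_def)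
qed

lemma exists_less_right_if_deriv_neg:
  fixes f :: "real \<Rightarrow> real"
  assumes "DERIV f x :> l" "l < 0" "0 < e"
  shows "\<exists>y. x < y \<and> y < x + e \<and> f y < f x"
proof -
  obtain d where "0 < d" and d: "\<And>h. 0 < h \<Longrightarrow> h < d \<Longrightarrow> f (x + h) < f x"
    using has_real_derivative_neg_dec_right[OF assms(1,2)] by auto
  with \<open>0 < e\<close> show ?thesis
    by (intro exI[of _ "x + min (d / 2) (e / 2)"]) auto
qed

lemma exists_greater_right_if_deriv_pos:
  fixes f :: "real \<Rightarrow> real"
  assumes "DERIV f x :> l" "0 < l" "0 < e"
  shows "\<exists>y. x < y \<and> y < x + e \<and> f x < f y"
  using exists_less_right_if_deriv_neg[OF DERIV_minus[OF assms(1)]] assms(2,3) by auto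

lemma exists_between_if_continuous:
  fixes f :: "real \<Rightarrow> real"
  assumes "continuous_on UNIV f" and "f a \<le> y \<and> y \<le> f b \<or> f b \<le> y \<and> y \<le> f a"
  shows "\<exists>x. f x = y"
proof -
  have "connected (range f)"
    using connected_continuous_image[OF assms(1) connected_UNIV] .
  then have "y \<in> range f"
    using assms(2) connectedD_interval[of "range f"] by blast
  then show ?thesis by auto
qed

lemma last_crossing:
  fixes f :: "real \<Rightarrow> real"
  assumes cont: "continuous_on UNIV f" and "t1 \<le> t2" "f t1 < c" "c < f t2"
  shows "\<exists>t0. t1 < t0 \<and> t0 < t2 \<and> f t0 = c \<and> (\<forall>t. t0 < t \<and> t \<le> t2 \<longrightarrow> c < f t)"
proof -
  define Z where "Z = {t1..t2} \<inter> {t. f t = c}"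
  have cont': "continuous_on {x..y} f" for x y
    using continuous_on_subset[OF cont subset_UNIV] .
  obtain z where "t1 \<le> z" "z \<le> t2" "f z = c"
    using IVT'[OF less_imp_le less_imp_le \<open>t1 \<le> t2\<close> cont'] assms(3,4) by blast
  then have "Z \<noteq> {}"
    by (auto simp: Z_def)
  moreover have "compact Z"
    unfolding Z_def using cont by (intro compact_Int_closed closed_Collect_eq) auto
  ultimately obtain t0 where t0: "t0 \<in> Z" and last: "\<And>t. t \<in> Z \<Longrightarrow> t \<le> t0"
    using compact_attains_sup by meson
  have after: "c < f t" if "t0 < t" "t \<le> t2" for t
  proof (rule ccontr)
    assume "\<not> c < f t"
    then obtain x where "t \<le> x" "x \<le> t2" "f x = c"
      using IVT'[OF _ less_imp_le[OF assms(4)] \<open>t \<le> t2\<close> cont'] by force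
    with last[of x] t0 that show False
      by (auto simp: Z_def)
  qed
  have "t0 \<noteq> t1" "t0 \<noteq> t2"
    using t0 assms(3,4) by (auto simp: Z_def)
  with t0 after show ?thesis
    by (intro exI[of _ t0]) (auto simp: Z_def)
qed

lemma vanishes_if_deriv_dominated_forward:
  fixes u u' :: "real \<Rightarrow> real"
  assumes "t0 \<le> t"
    and deriv: "\<And>x. DERIV u x :> u' x"
    and bound: "\<And>x. t0 \<le> x \<Longrightarrow> x \<le> t \<Longrightarrow> u' x \<le> C * u x"
    and "u t0 = 0" and "0 \<le> u t"
  shows "u t = 0"
proof -
  have "u t * exp (- C * t) \<le> u t0 * exp (- C * t0)"
  proof (rule DERIV_nonpos_imp_nonincreasing[OF \<open>t0 \<le> t\<close>])
    fix x assume "t0 \<le> x" "x \<le> t"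
    have "DERIV (\<lambda>y. u y * exp (- C * y)) x :> (u' x - C * u x) * exp (- C * x)"
      by (rule derivative_eq_intros deriv refl)+ (simp add: algebra_simps)
    moreover have "(u' x - C * u x) * exp (- C * x) \<le> 0"
      using bound[OF \<open>t0 \<le> x\<close> \<open>x \<le> t\<close>] by (simp add: mult_nonpos_nonneg)
    ultimately show "\<exists>y. DERIV (\<lambda>y. u y * exp (- C * y)) x :> y \<and> y \<le> 0"
      by blast
  qed
  with \<open>u t0 = 0\<close> \<open>0 \<le> u t\<close> show ?thesis
    by (simp add: mult_le_0_iff)
qed

lemma vanishes_if_deriv_dominated:
  fixes u u' :: "real \<Rightarrow> real"
  assumes deriv: "\<And>x. DERIV u x :> u' x"
    and bound: "\<And>x. min t0 t \<le> x \<Longrightarrow> x \<le> max t0 t \<Longrightarrow> \<bar>u' x\<bar> \<le> C * u x"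
    and "u t0 = 0" and "0 \<le> u t"
  shows "u t = 0"
proof (cases "t0 \<le> t")
  case True
  show ?thesis
    using bound assms(3,4)
    by (intro vanishes_if_deriv_dominated_forward[OF True deriv, of C])
      (auto simp: True abs_le_iff)
next
  case False
  have "DERIV (\<lambda>x. u (- x)) x :> - u' (- x)" for x
    using deriv[of "- x"] by (simp add: DERIV_mirror)
  then have "u (- (- t)) = 0"
    using bound assms(3,4) False
    by (intro vanishes_if_deriv_dominated_forward[of "- t0" "- t" "\<lambda>x. u (- x)" "\<lambda>x. - u' (- x)" C])
      (auto simp: abs_le_iff)
  then show ?thesis by simp
qed

lemma abs_sin_diff_le: "\<bar>sin x - sin y\<bar> \<le> \<bar>x - y\<bar>" for x y :: real
proof -
  have "\<bar>sin x - sin y\<bar> = 2 * \<bar>sin ((x - y) / 2)\<bar> * \<bar>cos ((x + y) / 2)\<bar>"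
    by (simp add: sin_diff_sin abs_mult)
  also have "\<dots> \<le> 2 * \<bar>(x - y) / 2\<bar> * 1"
    by (intro mult_mono abs_sin_x_le_abs_x) auto
  finally show ?thesis by simp
qed

lemma abs_cos_diff_le: "\<bar>cos x - cos y\<bar> \<le> \<bar>x - y\<bar>" for x y :: real
proof -
  have "\<bar>cos x - cos y\<bar> = 2 * \<bar>sin ((x + y) / 2)\<bar> * \<bar>sin ((y - x) / 2)\<bar>"
    by (simp add: cos_diff_cos abs_mult)
  also have "\<dots> \<le> 2 * 1 * \<bar>(y - x) / 2\<bar>"
    by (intro mult_mono abs_sin_x_le_abs_x) auto
  finally show ?thesis by simp
qed

lemma abs_cos_ge_if_sin_between:
  fixes x :: real
  assumes "l \<le> sin x" "sin x \<le> u"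
  shows "1 - max (l\<^sup>2) (u\<^sup>2) \<le> \<bar>cos x\<bar>"
proof -
  have "(sin x)\<^sup>2 \<le> max (l\<^sup>2) (u\<^sup>2)"
  proof (cases "0 \<le> sin x")
    case True
    then have "(sin x)\<^sup>2 \<le> u\<^sup>2" using assms by (intro power_mono) auto
    then show ?thesis by simp
  next
    case False
    then have "(- sin x)\<^sup>2 \<le> (- l)\<^sup>2" using assms by (intro power_mono) auto
    then show ?thesis by simp
  qed
  moreover have "(cos x)\<^sup>2 \<le> \<bar>cos x\<bar>"
  proof -
    have "\<bar>cos x\<bar> * \<bar>cos x\<bar> \<le> 1 * \<bar>cos x\<bar>"
      by (intro mult_right_mono) auto
    then show ?thesis by (simp add: power2_eq_square)
  qed
  ultimately show ?thesis
    using sin_cos_squared_add[of x] by linarith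
qed

lemma cos_neg_if_between: "pi / 2 < x \<Longrightarrow> x < 3 * pi / 2 \<Longrightarrow> cos x < 0"
  using cos_gt_zero_pi[of "x - pi"] by simp

lemma cos_nonpos_if_between: "pi / 2 \<le> x \<Longrightarrow> x \<le> 3 * pi / 2 \<Longrightarrow> cos x \<le> 0"
  using cos_ge_zero[of "x - pi"] by simp

lemma sin_antimono_between:
  "pi / 2 \<le> x \<Longrightarrow> x \<le> y \<Longrightarrow> y \<le> 3 * pi / 2 \<Longrightarrow> sin y \<le> sin x"
  using sin_mono_le_eq[of "pi - y" "pi - x"] by simp

lemma sin_inj_between:
  "pi / 2 \<le> x \<Longrightarrow> x \<le> 3 * pi / 2 \<Longrightarrow> pi / 2 \<le> y \<Longrightarrow> y \<le> 3 * pi / 2 \<Longrightarrow> sin x = sin y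
    \<Longrightarrow> x = y"
  using sin_inj_pi[of "pi - x" "pi - y"] by simp

lemma exists_lift_between_if_sin_ne_minus_one:
  fixes f :: "real \<Rightarrow> real"
  assumes cont: "continuous_on UNIV f" and ne: "\<And>t. sin (f t) \<noteq> - 1"
  shows "\<exists>m::int. \<forall>t. - (pi / 2) < f t - 2 * pi * of_int m \<and> f t - 2 * pi * of_int m < 3 * pi / 2"
proof -
  define m where "m = \<lfloor>(f 0 + pi / 2) / (2 * pi)\<rfloor>"
  define g where "g t = f t - 2 * pi * of_int m" for t
  have "of_int m \<le> (f 0 + pi / 2) / (2 * pi)" "(f 0 + pi / 2) / (2 * pi) < of_int m + 1"
    unfolding m_def by linarith+
  then have g0: "- (pi / 2) \<le> g 0" "g 0 < 3 * pi / 2"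
    by (simp_all add: g_def field_simps)
  have "sin (3 * pi / 2) = - 1"
    using sin_periodic_pi[of "pi / 2"] by (simp add: add_divide_distrib)
  moreover have "sin (g t) = sin (f t)" for t
    by (simp add: g_def sin_diff)
  ultimately have avoids: "g t \<noteq> - (pi / 2) \<and> g t \<noteq> 3 * pi / 2" for t
    using ne[of t] by (metis sin_minus sin_pi_half)
  have cont_g: "continuous_on UNIV g"
    unfolding g_def by (intro continuous_intros cont)
  have "- (pi / 2) < g t \<and> g t < 3 * pi / 2" for t
  proof (rule ccontr)
    assume "\<not> (- (pi / 2) < g t \<and> g t < 3 * pi / 2)"
    then consider "g t \<le> - (pi / 2)" | "3 * pi / 2 \<le> g t"
      by linarith
    then show False
    proof cases
      case 1
      then obtain x where "g x = - (pi / 2)"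
        using exists_between_if_continuous[OF cont_g, of t "- (pi / 2)" 0] g0 by blast
      with avoids show False by blast
    next
      case 2
      then obtain x where "g x = 3 * pi / 2"
        using exists_between_if_continuous[OF cont_g, of 0 "3 * pi / 2" t] g0 by fastforce
      with avoids show False by blast
    qed
  qed
  then show ?thesis
    unfolding g_def by blast
qed

section \<open>Solutions of the branch system\<close>

lemma
  assumes "branch_solution a \<theta> \<rho>"
  shows branch_solution_pos: "0 < \<rho> t"
    and branch_solution_theta_deriv: "DERIV \<theta> t :> (1 + sin (\<theta> t)) / \<rho> t - 2 * sin a"
    and branch_solution_rho_deriv: "DERIV \<rho> t :> - cos (\<theta> t)"
  using assms unfolding branch_solution_def by auto

lemma branch_solution_continuous:
  assumes "branch_solution a \<theta> \<rho>"
  shows "continuous_on S \<theta>" "continuous_on S \<rho>"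
  using branch_solution_theta_deriv[OF assms] branch_solution_rho_deriv[OF assms]
  by (meson DERIV_isCont continuous_at_imp_continuous_on)+

lemma branch_energy_constant:
  assumes "branch_solution a \<theta> \<rho>"
  shows "branch_energy a (\<theta> t) (\<rho> t) = branch_energy a (\<theta> 0) (\<rho> 0)"
proof -
  define e where "e t = branch_energy a (\<theta> t) (\<rho> t)" for t
  have "DERIV e x :> 0" for x
  proof -
    have "DERIV e x :> - cos (\<theta> x) * (1 + sin (\<theta> x))
        + \<rho> x * (cos (\<theta> x) * ((1 + sin (\<theta> x)) / \<rho> x - 2 * sin a))
        - 2 * \<rho> x * - cos (\<theta> x) * sin a"
      unfolding e_def branch_energy_def
      by (rule derivative_eq_intros branch_solution_theta_deriv[OF assms]
          branch_solution_rho_deriv[OF assms] refl)+ simp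
    then show ?thesis
      using branch_solution_pos[OF assms, of x] by (simp add: field_simps)
  qed
  then show ?thesis
    using DERIV_isconst_all[of e t 0] by (simp add: e_def)
qed

lemma branch_solution_shift:
  assumes "branch_solution a \<theta> \<rho>"
  shows "branch_solution a (\<lambda>t. \<theta> (t + T) - 2 * pi * of_int k) (\<lambda>t. \<rho> (t + T))"
  unfolding branch_solution_def
proof (intro conjI allI)
  fix t
  have shift: "sin (x - 2 * pi * of_int k) = sin x" "cos (x - 2 * pi * of_int k) = cos x" for x
    by (simp_all add: sin_diff cos_diff)
  show "0 < \<rho> (t + T)"
    by (rule branch_solution_pos[OF assms])
  show "((\<lambda>t. \<theta> (t + T) - 2 * pi * of_int k) has_real_derivative
      (1 + sin (\<theta> (t + T) - 2 * pi * of_int k)) / \<rho> (t + T) - 2 * sin a) (at t)"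
    using branch_solution_theta_deriv[OF assms, of "t + T"]
    by (auto simp: shift DERIV_shift intro!: derivative_eq_intros)
  show "((\<lambda>t. \<rho> (t + T)) has_real_derivative - cos (\<theta> (t + T) - 2 * pi * of_int k)) (at t)"
    using branch_solution_rho_deriv[OF assms, of "t + T"] by (simp add: shift DERIV_shift)
qed

lemma abs_theta_field_diff_le:
  fixes x1 x2 r1 r2 d :: real
  assumes "0 < d" "d \<le> r1" "d \<le> r2"
  shows "\<bar>(1 + sin x1) / r1 - (1 + sin x2) / r2\<bar> \<le> \<bar>x1 - x2\<bar> / d + 2 * \<bar>r1 - r2\<bar> / d\<^sup>2"
proof -
  have "(1 + sin x1) / r1 - (1 + sin x2) / r2
      = (sin x1 - sin x2) / r1 + (1 + sin x2) * (r2 - r1) / (r1 * r2)"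
    using assms by (simp add: field_simps)
  also have "\<bar>\<dots>\<bar> \<le> \<bar>x1 - x2\<bar> / d + 2 * \<bar>r1 - r2\<bar> / d\<^sup>2"
  proof (rule order_trans[OF abs_triangle_ineq add_mono])
    show "\<bar>(sin x1 - sin x2) / r1\<bar> \<le> \<bar>x1 - x2\<bar> / d"
      using assms abs_sin_diff_le[of x1 x2] by (simp add: abs_div frac_le)
    have "\<bar>1 + sin x2\<bar> \<le> 2"
      using abs_sin_le_one[of x2] by linarith
    moreover have "d\<^sup>2 \<le> \<bar>r1 * r2\<bar>"
      using assms by (simp add: abs_mult power2_eq_square mult_mono)
    ultimately show "\<bar>(1 + sin x2) * (r2 - r1) / (r1 * r2)\<bar> \<le> 2 * \<bar>r1 - r2\<bar> / d\<^sup>2"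
      using assms unfolding abs_divide abs_mult
      by (intro frac_le mult_mono) (auto simp: abs_minus_commute)
  qed
  finally show ?thesis .
qed

lemma branch_solution_unique:
  assumes sol1: "branch_solution a \<theta>1 \<rho>1" and sol2: "branch_solution a \<theta>2 \<rho>2"
    and "\<theta>1 t0 = \<theta>2 t0" "\<rho>1 t0 = \<rho>2 t0"
  shows "\<theta>1 t = \<theta>2 t \<and> \<rho>1 t = \<rho>2 t"
proof -
  define I where "I = {min t0 t..max t0 t}"
  have "continuous_on I (\<lambda>x. min (\<rho>1 x) (\<rho>2 x))"
    using branch_solution_continuous(2)[OF sol1] branch_solution_continuous(2)[OF sol2]
    by (rule continuous_on_min)
  then obtain x0 where x0: "\<And>x. x \<in> I \<Longrightarrow> min (\<rho>1 x0) (\<rho>2 x0) \<le> min (\<rho>1 x) (\<rho>2 x)"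
    using continuous_attains_inf[of I] unfolding I_def by fastforce
  define d where "d = min (\<rho>1 x0) (\<rho>2 x0)"
  have "0 < d"
    using branch_solution_pos[OF sol1] branch_solution_pos[OF sol2] by (simp add: d_def)
  define F where "F x = (1 + sin (\<theta>1 x)) / \<rho>1 x - (1 + sin (\<theta>2 x)) / \<rho>2 x" for x
  define G where "G x = cos (\<theta>2 x) - cos (\<theta>1 x)" for x
  define u where "u x = (\<theta>1 x - \<theta>2 x)\<^sup>2 + (\<rho>1 x - \<rho>2 x)\<^sup>2" for x
  define u' where "u' x = 2 * (\<theta>1 x - \<theta>2 x) * F x + 2 * (\<rho>1 x - \<rho>2 x) * G x" for x
  have "DERIV u x :> u' x" for x
  proof -
    have "DERIV (\<lambda>x. \<theta>1 x - \<theta>2 x) x :> F x"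
      using DERIV_diff[OF branch_solution_theta_deriv[OF sol1] branch_solution_theta_deriv[OF sol2]]
      by (simp add: F_def)
    moreover have "DERIV (\<lambda>x. \<rho>1 x - \<rho>2 x) x :> G x"
      using DERIV_diff[OF branch_solution_rho_deriv[OF sol1] branch_solution_rho_deriv[OF sol2]]
      by (simp add: G_def)
    ultimately have "DERIV u x :> of_nat 2 * (F x * (\<theta>1 x - \<theta>2 x) ^ (2 - Suc 0))
        + of_nat 2 * (G x * (\<rho>1 x - \<rho>2 x) ^ (2 - Suc 0))"
      unfolding u_def by (rule DERIV_add[OF DERIV_power DERIV_power])
    then show ?thesis
      by (rule DERIV_cong) (simp add: u'_def algebra_simps)
  qed
  moreover have "\<bar>u' x\<bar> \<le> (2 / d + 2 / d\<^sup>2 + 1) * u x" if "x \<in> I" for x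
  proof -
    define p where "p = \<bar>\<theta>1 x - \<theta>2 x\<bar>"
    define q where "q = \<bar>\<rho>1 x - \<rho>2 x\<bar>"
    have "\<bar>u' x\<bar> \<le> 2 * p * (p / d + 2 * q / d\<^sup>2) + 2 * q * p"
      unfolding u'_def F_def G_def p_def q_def
    proof (rule order_trans[OF abs_triangle_ineq add_mono])
      show "\<bar>2 * (\<theta>1 x - \<theta>2 x) * ((1 + sin (\<theta>1 x)) / \<rho>1 x - (1 + sin (\<theta>2 x)) / \<rho>2 x)\<bar>
          \<le> 2 * \<bar>\<theta>1 x - \<theta>2 x\<bar> * (\<bar>\<theta>1 x - \<theta>2 x\<bar> / d + 2 * \<bar>\<rho>1 x - \<rho>2 x\<bar> / d\<^sup>2)"
        using abs_theta_field_diff_le[OF \<open>0 < d\<close>] x0[OF that] unfolding abs_mult abs_numeral d_def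
        by (intro mult_left_mono) auto
      show "\<bar>2 * (\<rho>1 x - \<rho>2 x) * (cos (\<theta>2 x) - cos (\<theta>1 x))\<bar>
          \<le> 2 * \<bar>\<rho>1 x - \<rho>2 x\<bar> * \<bar>\<theta>1 x - \<theta>2 x\<bar>"
        using abs_cos_diff_le[of "\<theta>2 x" "\<theta>1 x"] unfolding abs_mult abs_numeral
        by (intro mult_left_mono) (auto simp: abs_minus_commute)
    qed
    also have "\<dots> = 2 / d * p\<^sup>2 + (2 / d\<^sup>2 + 1) * (2 * p * q)"
      by (simp add: algebra_simps power2_eq_square)
    also have "\<dots> \<le> 2 / d * p\<^sup>2 + (2 / d\<^sup>2 + 1) * (p\<^sup>2 + q\<^sup>2)"
      using sum_squares_bound[of p q] by (intro add_left_mono mult_left_mono) auto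
    also have "\<dots> \<le> (2 / d + 2 / d\<^sup>2 + 1) * u x"
      using \<open>0 < d\<close> by (simp add: u_def p_def q_def algebra_simps)
    finally show ?thesis .
  qed
  ultimately have "u t = 0"
    by (intro vanishes_if_deriv_dominated[of u u' t0 t]) (auto simp: I_def u_def assms(3,4))
  then show ?thesis
    by (simp add: u_def)
qed

lemma periodic_on_cylinder_if_return:
  assumes sol: "branch_solution a \<theta> \<rho>" and "0 < T"
    and "\<theta> (t0 + T) = \<theta> t0 + 2 * pi * of_int k" and "\<rho> (t0 + T) = \<rho> t0"
  shows "periodic_on_cylinder \<theta> \<rho>"
proof -
  have "\<theta> (t + T) - 2 * pi * of_int k = \<theta> t \<and> \<rho> (t + T) = \<rho> t" for t
    using branch_solution_unique[OF branch_solution_shift[OF sol, of T k] sol, of t0 t] assms(3,4) by simp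
  with \<open>0 < T\<close> show ?thesis
    unfolding periodic_on_cylinder_def by (auto simp: algebra_simps)
qed

lemma sin_mult_branch_energy:
  "sin a * branch_energy a th r = sin a * r * (1 + sin th) - (sin a * r)\<^sup>2"
  by (simp add: branch_energy_def algebra_simps power2_eq_square)

lemma sin_mult_branch_energy_le_one:
  assumes "0 < r"
  shows "sin a * branch_energy a th r \<le> 1"
proof (cases "0 \<le> sin a * r")
  case True
  then have "sin a * r * (1 + sin th) \<le> sin a * r * 2"
    using sin_le_one[of th] by (intro mult_left_mono) auto
  moreover have "0 \<le> (sin a * r - 1)\<^sup>2" by simp
  ultimately show ?thesis
    unfolding sin_mult_branch_energy by (simp add: power2_eq_square algebra_simps)
next
  case False
  have "0 \<le> 1 + sin th"
    using sin_ge_minus_one[of th] by linarith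
  with False have "sin a * r * (1 + sin th) \<le> 0"
    by (simp add: mult_nonpos_nonneg)
  then show ?thesis
    unfolding sin_mult_branch_energy using zero_le_power2[of "sin a * r"] by linarith
qed

lemma sin_mult_branch_energy_eq_one_iff:
  assumes "0 < r"
  shows "sin a * branch_energy a th r = 1 \<longleftrightarrow> sin a * r = 1 \<and> sin th = 1"
proof
  assume E: "sin a * branch_energy a th r = 1"
  define x where "x = sin a * r"
  have sq: "(x - 1)\<^sup>2 + x * (1 - sin th) = 0"
    using E unfolding sin_mult_branch_energy x_def[symmetric] by (simp add: power2_eq_square algebra_simps)
  have "0 \<le> x"
  proof (rule ccontr)
    assume "\<not> 0 \<le> x"
    then have "x * 2 \<le> x * (1 - sin th)"
      using sin_ge_minus_one[of th] sin_le_one[of th] by (intro mult_left_mono_neg) auto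
    moreover have "(x - 1)\<^sup>2 = x\<^sup>2 - 2 * x + 1"
      by (simp add: power2_diff)
    ultimately show False
      using sq zero_le_power2[of x] by linarith
  qed
  then have "0 \<le> x * (1 - sin th)"
    using sin_le_one[of th] by simp
  with sq have "(x - 1)\<^sup>2 = 0" "x * (1 - sin th) = 0"
    using zero_le_power2[of "x - 1"] by linarith+
  then show "sin a * r = 1 \<and> sin th = 1"
    by (simp add: x_def)
qed (simp add: sin_mult_branch_energy)

lemma sin_pos_if_sin_mult_branch_energy_pos:
  assumes "0 < r" and "0 < sin a * branch_energy a th r"
  shows "0 < sin a"
proof (rule ccontr)
  assume "\<not> 0 < sin a"
  moreover have "0 \<le> 1 + sin th"
    using sin_ge_minus_one[of th] by linarith
  ultimately have "sin a * r * (1 + sin th) \<le> 0"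
    using \<open>0 < r\<close> by (simp add: mult_nonpos_nonneg)
  with assms(2) show False
    unfolding sin_mult_branch_energy using zero_le_power2[of "sin a * r"] by linarith
qed

lemma theta_field_eq_branch_energy:
  assumes "r \<noteq> 0"
  shows "(1 + sin th) / r - 2 * sin a = branch_energy a th r / r\<^sup>2 - sin a"
  using assms by (simp add: branch_energy_def field_simps power2_eq_square)

lemma radius_eq_if_branch_energy_eq:
  assumes "branch_energy a th r1 = branch_energy a th r2"
    and "branch_energy a th r1 \<noteq> sin a * r1 * r2"
  shows "r1 = r2"
proof -
  have "(r1 - r2) * (1 + sin th - sin a * (r1 + r2)) = 0"
    using assms(1) by (simp add: branch_energy_def algebra_simps power2_eq_square)
  moreover have "1 + sin th - sin a * (r1 + r2) \<noteq> 0"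
  proof
    assume "1 + sin th - sin a * (r1 + r2) = 0"
    then have "branch_energy a th r1 = r1 * (sin a * (r1 + r2)) - r1\<^sup>2 * sin a"
      unfolding branch_energy_def by (simp add: algebra_simps)
    with assms(2) show False
      by (simp add: algebra_simps power2_eq_square)
  qed
  ultimately show ?thesis by simp
qed

section \<open>Rotating orbits and the equilibrium\<close>

lemma periodic_if_sin_mult_energy_nonpos:
  assumes sol: "branch_solution a \<theta> \<rho>" and "sin a \<noteq> 0"
    and energy: "\<And>t. branch_energy a (\<theta> t) (\<rho> t) = E" and "sin a * E \<le> 0"
  shows "periodic_on_cylinder \<theta> \<rho>"
proof -
  \<comment> \<open>\<open>k = - sgn (sin a)\<close> is the direction in which \<theta> winds.\<close>
  define k :: int where "k = (if sin a < 0 then 1 else - 1)"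
  have "0 \<le> of_int k * E" and k_sin: "of_int k * sin a = - \<bar>sin a\<bar>"
    using \<open>sin a * E \<le> 0\<close> \<open>sin a \<noteq> 0\<close> by (auto simp: k_def mult_le_0_iff)
  have rate: "\<bar>sin a\<bar> \<le> of_int k * ((1 + sin (\<theta> t)) / \<rho> t - 2 * sin a)" for t
  proof -
    have "0 \<le> of_int k * E / (\<rho> t)\<^sup>2"
      using \<open>0 \<le> of_int k * E\<close> by simp
    then show ?thesis
      using theta_field_eq_branch_energy[of "\<rho> t" "\<theta> t" a] branch_solution_pos[OF sol, of t] energy[of t] k_sin
      by (simp add: algebra_simps)
  qed
  obtain T where "0 < T" and "of_int k * \<theta> T = of_int k * \<theta> 0 + 2 * pi"
    using exists_increment_if_deriv_ge[OF DERIV_cmult[OF branch_solution_theta_deriv[OF sol]] rate,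
        where d = "2 * pi"] \<open>sin a \<noteq> 0\<close> by auto
  then have \<theta>T: "\<theta> (0 + T) = \<theta> 0 + 2 * pi * of_int k"
    by (auto simp: k_def split: if_splits)
  then have "branch_energy a (\<theta> 0) (\<rho> T) = branch_energy a (\<theta> 0) (\<rho> 0)"
    using energy[of T] energy[of 0] by (simp add: branch_energy_def sin_add)
  moreover have "branch_energy a (\<theta> 0) (\<rho> T) \<noteq> sin a * \<rho> T * \<rho> 0"
  proof
    assume "branch_energy a (\<theta> 0) (\<rho> T) = sin a * \<rho> T * \<rho> 0"
    then have "sin a * E = (sin a)\<^sup>2 * \<rho> T * \<rho> 0"
      using energy[of 0] energy[of T] \<theta>T by (simp add: branch_energy_def sin_add power2_eq_square)
    moreover have "0 < (sin a)\<^sup>2 * \<rho> T * \<rho> 0"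
      using \<open>sin a \<noteq> 0\<close> branch_solution_pos[OF sol] by simp
    ultimately show False
      using \<open>sin a * E \<le> 0\<close> by simp
  qed
  ultimately have "\<rho> (0 + T) = \<rho> 0"
    by (simp add: radius_eq_if_branch_energy_eq)
  with \<theta>T show ?thesis
    by (rule periodic_on_cylinder_if_return[OF sol \<open>0 < T\<close>])
qed

lemma periodic_if_sin_mult_energy_eq_one:
  assumes sol: "branch_solution a \<theta> \<rho>"
    and energy: "\<And>t. branch_energy a (\<theta> t) (\<rho> t) = E" and "sin a * E = 1"
  shows "periodic_on_cylinder \<theta> \<rho>"
proof -
  have equilibrium: "sin a * \<rho> t = 1 \<and> sin (\<theta> t) = 1" for t
    using sin_mult_branch_energy_eq_one_iff[OF branch_solution_pos[OF sol]] energy \<open>sin a * E = 1\<close>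
    by metis
  have "DERIV \<theta> t :> 0" for t
  proof -
    have "(1 + sin (\<theta> t)) / \<rho> t - 2 * sin a = 0"
      using equilibrium[of t] branch_solution_pos[OF sol, of t] by (simp add: field_simps)
    then show ?thesis
      using branch_solution_theta_deriv[OF sol, of t] by simp
  qed
  then have "\<theta> (0 + 1) = \<theta> 0 + 2 * pi * of_int 0"
    by (simp add: DERIV_isconst_all)
  moreover have "\<rho> (0 + 1) = \<rho> 0"
  proof -
    have "sin a * \<rho> 1 = sin a * \<rho> 0" "sin a \<noteq> 0"
      using equilibrium[of 0] equilibrium[of 1] by auto
    then show ?thesis by simp
  qed
  ultimately show ?thesis
    by (rule periodic_on_cylinder_if_return[OF sol zero_less_one])
qed

section \<open>Orbits around the equilibrium\<close>

locale oval_orbit =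
  fixes a E :: real and \<theta> \<rho> :: "real \<Rightarrow> real"
  assumes solution: "branch_solution a \<theta> \<rho>"
    and energy: "\<And>t. branch_energy a (\<theta> t) (\<rho> t) = E"
    and energy_pos: "0 < sin a * E" and energy_less_one: "sin a * E < 1"
    and theta_range: "\<And>t. - (pi / 2) < \<theta> t \<and> \<theta> t < 3 * pi / 2"
begin

lemma rho_pos: "0 < \<rho> t"
  using branch_solution_pos[OF solution] .

lemma rho_deriv: "DERIV \<rho> t :> - cos (\<theta> t)"
  using branch_solution_rho_deriv[OF solution] .

lemma sin_a_pos: "0 < sin a"
  using sin_pos_if_sin_mult_branch_energy_pos[OF rho_pos[of 0], of a "\<theta> 0"] energy[of 0] energy_pos
  by simp

lemma E_pos: "0 < E"
  using energy_pos sin_a_pos by (simp add: zero_less_mult_iff)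

definition r_crit :: real where "r_crit = sqrt (E / sin a)"

definition theta_rate :: "real \<Rightarrow> real" where "theta_rate r = E / r\<^sup>2 - sin a"

lemma r_crit_pos: "0 < r_crit"
  using E_pos sin_a_pos by (simp add: r_crit_def)

lemma theta_deriv: "DERIV \<theta> t :> theta_rate (\<rho> t)"
  using branch_solution_theta_deriv[OF solution, of t] theta_field_eq_branch_energy[of "\<rho> t" "\<theta> t" a]
    energy[of t] rho_pos[of t]
  by (simp add: theta_rate_def)

lemma theta_rate_crit: "theta_rate r_crit = 0"
  using E_pos sin_a_pos by (simp add: theta_rate_def r_crit_def)

lemma theta_rate_antimono: "0 < r \<Longrightarrow> r \<le> r' \<Longrightarrow> theta_rate r' \<le> theta_rate r"
  unfolding theta_rate_def using E_pos by (simp add: divide_left_mono power_mono)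

lemma theta_rate_strict_antimono: "0 < r \<Longrightarrow> r < r' \<Longrightarrow> theta_rate r' < theta_rate r"
  unfolding theta_rate_def using E_pos by (simp add: divide_strict_left_mono power_strict_mono)

lemma theta_nondecreasing:
  assumes "t1 \<le> t2" and below: "\<And>x. t1 \<le> x \<Longrightarrow> x \<le> t2 \<Longrightarrow> \<rho> x \<le> r_crit"
  shows "\<theta> t1 \<le> \<theta> t2"
proof -
  have "\<theta> t1 + 0 * (t2 - t1) \<le> \<theta> t2"
  proof (rule increment_ge_if_deriv_ge[OF \<open>t1 \<le> t2\<close> theta_deriv])
    fix x assume "t1 \<le> x" "x \<le> t2"
    then show "0 \<le> theta_rate (\<rho> x)"
      using theta_rate_antimono[OF rho_pos below] theta_rate_crit by metis
  qed
  then show ?thesis by simp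
qed

lemma theta_nonincreasing:
  assumes "t1 \<le> t2" and above: "\<And>x. t1 \<le> x \<Longrightarrow> x \<le> t2 \<Longrightarrow> r_crit \<le> \<rho> x"
  shows "\<theta> t2 \<le> \<theta> t1"
proof -
  have "\<theta> t2 \<le> \<theta> t1 + 0 * (t2 - t1)"
  proof (rule increment_le_if_deriv_le[OF \<open>t1 \<le> t2\<close> theta_deriv])
    fix x assume "t1 \<le> x" "x \<le> t2"
    then show "theta_rate (\<rho> x) \<le> 0"
      using theta_rate_antimono[OF r_crit_pos above] theta_rate_crit by metis
  qed
  then show ?thesis by simp
qed

lemma not_equilibrium: "\<theta> t = pi / 2 \<Longrightarrow> \<rho> t \<noteq> r_crit"
proof
  assume "\<theta> t = pi / 2" "\<rho> t = r_crit"
  then have "sin (\<theta> t) = 1" by (simp only: sin_pi_half)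
  with \<open>\<rho> t = r_crit\<close> have "2 * r_crit - r_crit\<^sup>2 * sin a = E"
    using energy[of t] by (simp add: branch_energy_def)
  moreover have "r_crit\<^sup>2 * sin a = E"
    using E_pos sin_a_pos by (simp add: r_crit_def)
  ultimately have "r_crit = E"
    by linarith
  with \<open>r_crit\<^sup>2 * sin a = E\<close> have "E * (sin a * E) = E * 1"
    by (simp add: power2_eq_square algebra_simps)
  with E_pos energy_less_one show False
    by simp
qed

lemma sin_theta_ge: "sin a * E / 2 - 1 \<le> sin (\<theta> t)"
proof -
  define x where "x = sin a * \<rho> t"
  have "0 < x"
    using sin_a_pos rho_pos by (simp add: x_def)
  have E_eq: "sin a * E = x * (1 + sin (\<theta> t) - x)"
    using sin_mult_branch_energy[of a "\<theta> t" "\<rho> t"] energy[of t]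
    by (simp add: x_def power2_eq_square algebra_simps)
  with energy_pos \<open>0 < x\<close> have "x < 1 + sin (\<theta> t)"
    by (simp add: zero_less_mult_iff)
  with sin_le_one[of "\<theta> t"] have "x \<le> 2" by linarith
  have "sin a * E \<le> x * (1 + sin (\<theta> t))"
    using E_eq zero_le_square[of x] by (simp add: right_diff_distrib)
  also have "\<dots> \<le> 2 * (1 + sin (\<theta> t))"
    using \<open>x \<le> 2\<close> \<open>x < 1 + sin (\<theta> t)\<close> \<open>0 < x\<close> by (intro mult_right_mono) auto
  finally show ?thesis by simp
qed

definition margin :: "real \<Rightarrow> real" where
  "margin y = 1 - max ((sin a * E / 2 - 1)\<^sup>2) ((sin y)\<^sup>2)"

lemma margin_pos: "cos y \<noteq> 0 \<Longrightarrow> 0 < margin y"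
proof -
  assume "cos y \<noteq> 0"
  then have "(sin y)\<^sup>2 < 1"
    using sin_cos_squared_add[of y] by (smt (verit) zero_less_power2)
  moreover have "(sin a * E / 2 - 1)\<^sup>2 < 1"
    using energy_pos energy_less_one by (simp add: abs_square_less_1)
  ultimately show ?thesis
    by (simp add: margin_def)
qed

lemma margin_le_abs_cos: "sin (\<theta> t) \<le> sin y \<Longrightarrow> margin y \<le> \<bar>cos (\<theta> t)\<bar>"
  unfolding margin_def by (rule abs_cos_ge_if_sin_between[OF sin_theta_ge])

lemma exists_above_crit_if_theta_gt:
  assumes "pi / 2 < \<theta> t1"
  shows "\<exists>t\<ge>t1. r_crit < \<rho> t"
proof (rule ccontr)
  assume "\<not> (\<exists>t\<ge>t1. r_crit < \<rho> t)"
  then have below: "\<And>t. t1 \<le> t \<Longrightarrow> \<rho> t \<le> r_crit"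
    by (simp add: not_less)
  define \<epsilon> where "\<epsilon> = margin (\<theta> t1)"
  have "0 < \<epsilon>"
    unfolding \<epsilon>_def using cos_neg_if_between[OF assms] theta_range[of t1]
    by (intro margin_pos) auto
  have "\<epsilon> \<le> - cos (\<theta> x)" if "t1 \<le> x" for x
  proof -
    have "\<theta> t1 \<le> \<theta> x"
      using theta_nondecreasing[OF that below] by simp
    then have "cos (\<theta> x) < 0" and "sin (\<theta> x) \<le> sin (\<theta> t1)"
      using assms theta_range[of x] by (auto intro: cos_neg_if_between sin_antimono_between)
    with margin_le_abs_cos show ?thesis
      unfolding \<epsilon>_def by fastforce
  qed
  then have "\<rho> t1 + \<epsilon> * (t1 + r_crit / \<epsilon> - t1) \<le> \<rho> (t1 + r_crit / \<epsilon>)"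
    using \<open>0 < \<epsilon>\<close> r_crit_pos rho_deriv
    by (intro increment_ge_if_deriv_ge[where f' = "\<lambda>x. - cos (\<theta> x)"]) auto
  with below[of "t1 + r_crit / \<epsilon>"] rho_pos[of t1] \<open>0 < \<epsilon>\<close> r_crit_pos show False
    by simp
qed

lemma exists_below_crit_if_theta_lt:
  assumes "\<theta> t1 < pi / 2"
  shows "\<exists>t\<ge>t1. \<rho> t < r_crit"
proof (rule ccontr)
  assume "\<not> (\<exists>t\<ge>t1. \<rho> t < r_crit)"
  then have above: "\<And>t. t1 \<le> t \<Longrightarrow> r_crit \<le> \<rho> t"
    by (simp add: not_less)
  define \<epsilon> where "\<epsilon> = margin (\<theta> t1)"
  have "0 < \<epsilon>"
    unfolding \<epsilon>_def using cos_gt_zero_pi[OF _ assms] theta_range[of t1]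
    by (intro margin_pos) auto
  have "cos (\<theta> x) \<ge> \<epsilon>" if "t1 \<le> x" for x
  proof -
    have "\<theta> x \<le> \<theta> t1"
      using theta_nonincreasing[OF that above] by simp
    then have "0 < cos (\<theta> x)" and "sin (\<theta> x) \<le> sin (\<theta> t1)"
      using assms theta_range[of x] theta_range[of t1]
      by (auto intro: cos_gt_zero_pi simp: sin_mono_le_eq)
    with margin_le_abs_cos show ?thesis
      unfolding \<epsilon>_def by fastforce
  qed
  then have "\<rho> (t1 + \<rho> t1 / \<epsilon>) \<le> \<rho> t1 + (- \<epsilon>) * (t1 + \<rho> t1 / \<epsilon> - t1)"
    using \<open>0 < \<epsilon>\<close> rho_pos[of t1] rho_deriv
    by (intro increment_le_if_deriv_le[where f' = "\<lambda>x. - cos (\<theta> x)"]) auto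
  with rho_pos[of "t1 + \<rho> t1 / \<epsilon>"] \<open>0 < \<epsilon>\<close> show False
    by simp
qed

lemma exists_above_crit_if_theta_le:
  assumes le: "\<And>t. b \<le> t \<Longrightarrow> \<theta> t \<le> pi / 2"
  shows "\<exists>t\<ge>b. r_crit < \<rho> t"
proof (rule ccontr)
  assume "\<not> (\<exists>t\<ge>b. r_crit < \<rho> t)"
  then have below: "\<And>t. b \<le> t \<Longrightarrow> \<rho> t \<le> r_crit"
    by (simp add: not_less)
  have cos_nonneg: "0 \<le> cos (\<theta> x)" if "b \<le> x" for x
    using le[OF that] theta_range[of x] by (intro cos_ge_zero) auto
  have rho_nonincreasing: "\<rho> t2 \<le> \<rho> t1" if "b \<le> t1" "t1 \<le> t2" for t1 t2
  proof -
    have "\<rho> t2 \<le> \<rho> t1 + 0 * (t2 - t1)"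
      using that cos_nonneg rho_deriv
      by (intro increment_le_if_deriv_le[where f' = "\<lambda>x. - cos (\<theta> x)"]) auto
    then show ?thesis by simp
  qed
  obtain b' where "b \<le> b'" "\<rho> b' < r_crit"
  proof (cases "\<rho> b < r_crit")
    case False
    then have "\<rho> b = r_crit"
      using below[of b] by simp
    then have "\<theta> b < pi / 2"
      using le[of b] not_equilibrium[of b] by force
    then have "- cos (\<theta> b) < 0"
      using theta_range[of b] cos_gt_zero_pi by simp
    then obtain y where "b < y" "\<rho> y < \<rho> b"
      using exists_less_right_if_deriv_neg[OF rho_deriv _ zero_less_one] by blast
    with that[of y] \<open>\<rho> b = r_crit\<close> show ?thesis
      by simp
  qed (use that in auto)
  define k where "k = theta_rate (\<rho> b')"
  have "0 < k"
    using theta_rate_strict_antimono[OF rho_pos \<open>\<rho> b' < r_crit\<close>] theta_rate_crit by (simp add: k_def)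
  have "\<theta> b' + k * (b' + pi / k - b') \<le> \<theta> (b' + pi / k)"
  proof (rule increment_ge_if_deriv_ge[OF _ theta_deriv])
    show "b' \<le> b' + pi / k"
      using \<open>0 < k\<close> by simp
    fix x assume "b' \<le> x"
    then show "k \<le> theta_rate (\<rho> x)"
      unfolding k_def using rho_nonincreasing[OF \<open>b \<le> b'\<close>] by (intro theta_rate_antimono rho_pos)
  qed
  moreover have "b \<le> b' + pi / k"
    using \<open>b \<le> b'\<close> \<open>0 < k\<close> by (simp add: add_increasing2)
  ultimately show False
    using theta_range[of b'] le[of "b' + pi / k"] \<open>0 < k\<close> by simp
qed

lemma exists_below_crit_if_theta_ge:
  assumes ge: "\<And>t. b \<le> t \<Longrightarrow> pi / 2 \<le> \<theta> t"
  shows "\<exists>t\<ge>b. \<rho> t < r_crit"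
proof (rule ccontr)
  assume "\<not> (\<exists>t\<ge>b. \<rho> t < r_crit)"
  then have above: "\<And>t. b \<le> t \<Longrightarrow> r_crit \<le> \<rho> t"
    by (simp add: not_less)
  have cos_nonpos: "cos (\<theta> x) \<le> 0" if "b \<le> x" for x
    using ge[OF that] theta_range[of x] by (intro cos_nonpos_if_between) auto
  have rho_nondecreasing: "\<rho> t1 \<le> \<rho> t2" if "b \<le> t1" "t1 \<le> t2" for t1 t2
  proof -
    have "\<rho> t1 + 0 * (t2 - t1) \<le> \<rho> t2"
      using that cos_nonpos rho_deriv
      by (intro increment_ge_if_deriv_ge[where f' = "\<lambda>x. - cos (\<theta> x)"]) auto
    then show ?thesis by simp
  qed
  obtain b' where "b \<le> b'" "r_crit < \<rho> b'"
  proof (cases "r_crit < \<rho> b")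
    case False
    then have "\<rho> b = r_crit"
      using above[of b] by simp
    then have "pi / 2 < \<theta> b"
      using ge[of b] not_equilibrium[of b] by force
    then have "0 < - cos (\<theta> b)"
      using theta_range[of b] cos_neg_if_between by simp
    then obtain y where "b < y" "\<rho> b < \<rho> y"
      using exists_greater_right_if_deriv_pos[OF rho_deriv _ zero_less_one] by blast
    with that[of y] \<open>\<rho> b = r_crit\<close> show ?thesis
      by simp
  qed (use that in auto)
  define k where "k = - theta_rate (\<rho> b')"
  have "0 < k"
    using theta_rate_strict_antimono[OF r_crit_pos \<open>r_crit < \<rho> b'\<close>] theta_rate_crit by (simp add: k_def)
  have "\<theta> (b' + pi / k) \<le> \<theta> b' + (- k) * (b' + pi / k - b')"
  proof (rule increment_le_if_deriv_le[OF _ theta_deriv])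
    show "b' \<le> b' + pi / k"
      using \<open>0 < k\<close> by simp
    fix x assume "b' \<le> x"
    then show "theta_rate (\<rho> x) \<le> - k"
      unfolding k_def using rho_nondecreasing[OF \<open>b \<le> b'\<close>] by (simp add: theta_rate_antimono rho_pos)
  qed
  moreover have "b \<le> b' + pi / k"
    using \<open>b \<le> b'\<close> \<open>0 < k\<close> by (simp add: add_increasing2)
  ultimately show False
    using theta_range[of b'] ge[of "b' + pi / k"] \<open>0 < k\<close> by simp
qed

lemma frequently_above_crit: "\<exists>t\<ge>b. r_crit < \<rho> t"
proof (cases "\<exists>t1\<ge>b. pi / 2 < \<theta> t1")
  case True
  then obtain t1 where "b \<le> t1" "pi / 2 < \<theta> t1" by blast
  with exists_above_crit_if_theta_gt show ?thesis
    by (meson order_trans)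
next
  case False
  then show ?thesis
    by (intro exists_above_crit_if_theta_le) (simp add: not_less)
qed

lemma frequently_below_crit: "\<exists>t\<ge>b. \<rho> t < r_crit"
proof (cases "\<exists>t1\<ge>b. \<theta> t1 < pi / 2")
  case True
  then obtain t1 where "b \<le> t1" "\<theta> t1 < pi / 2" by blast
  with exists_below_crit_if_theta_lt show ?thesis
    by (meson order_trans)
next
  case False
  then show ?thesis
    by (intro exists_below_crit_if_theta_ge) (simp add: not_less)
qed

lemma exists_upcrossing:
  assumes "t1 \<le> t2" "\<rho> t1 < r_crit" "r_crit < \<rho> t2"
  shows "\<exists>t. t1 < t \<and> t < t2 \<and> \<rho> t = r_crit \<and> pi / 2 < \<theta> t"
proof -
  obtain t0 where t0: "t1 < t0" "t0 < t2" "\<rho> t0 = r_crit"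
    and after: "\<And>t. t0 < t \<Longrightarrow> t \<le> t2 \<Longrightarrow> r_crit < \<rho> t"
    using last_crossing[OF branch_solution_continuous(2)[OF solution] assms] by blast
  have "\<not> 0 < cos (\<theta> t0)"
  proof
    assume "0 < cos (\<theta> t0)"
    then obtain y where "t0 < y" "y < t0 + (t2 - t0)" "\<rho> y < \<rho> t0"
      using exists_less_right_if_deriv_neg[OF rho_deriv, of t0 "t2 - t0"] t0 by auto
    with after[of y] t0 show False
      by simp
  qed
  then have "pi / 2 \<le> \<theta> t0"
    using theta_range[of t0] cos_gt_zero_pi[of "\<theta> t0"] by linarith
  moreover have "\<theta> t0 \<noteq> pi / 2"
    using not_equilibrium[of t0] t0(3) by blast
  ultimately show ?thesis
    using t0 by (intro exI[of _ t0]) simp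
qed

lemma periodic: "periodic_on_cylinder \<theta> \<rho>"
proof -
  \<comment> \<open>On the level \<open>\<rho> = r_crit\<close> the energy fixes \<open>sin \<theta>\<close>, hence \<theta> on \<open>(\<pi>/2, 3\<pi>/2)\<close>.\<close>
  have two_upcrossings: "\<exists>t. b < t \<and> \<rho> t = r_crit \<and> pi / 2 < \<theta> t" for b
  proof -
    obtain t1 where "b \<le> t1" "\<rho> t1 < r_crit"
      using frequently_below_crit by blast
    moreover obtain t2 where "t1 \<le> t2" "r_crit < \<rho> t2"
      using frequently_above_crit by blast
    ultimately show ?thesis
      using exists_upcrossing[of t1 t2] by (meson order_le_less_trans)
  qed
  obtain ta where ta: "\<rho> ta = r_crit" "pi / 2 < \<theta> ta"
    using two_upcrossings by blast
  obtain tb where tb: "ta < tb" "\<rho> tb = r_crit" "pi / 2 < \<theta> tb"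
    using two_upcrossings by blast
  have "branch_energy a (\<theta> tb) r_crit = branch_energy a (\<theta> ta) r_crit"
    using energy[of ta] energy[of tb] ta tb by simp
  then have "r_crit * (1 + sin (\<theta> tb)) = r_crit * (1 + sin (\<theta> ta))"
    unfolding branch_energy_def by linarith
  then have "sin (\<theta> tb) = sin (\<theta> ta)"
    using r_crit_pos by simp
  then have "\<theta> tb = \<theta> ta"
    using sin_inj_between[of "\<theta> tb" "\<theta> ta"] ta tb theta_range[of ta] theta_range[of tb] by auto
  then have "\<theta> (ta + (tb - ta)) = \<theta> ta + 2 * pi * of_int 0"
    by simp
  with tb ta show ?thesis
    by (intro periodic_on_cylinder_if_return[OF solution, of "tb - ta" ta]) auto
qed

end

lemma periodic_if_sin_mult_energy_between:
  assumes sol: "branch_solution a \<theta> \<rho>" and energy: "\<And>t. branch_energy a (\<theta> t) (\<rho> t) = E"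
    and "0 < sin a * E" "sin a * E < 1"
  shows "periodic_on_cylinder \<theta> \<rho>"
proof -
  have "sin (\<theta> t) \<noteq> - 1" for t
  proof
    assume "sin (\<theta> t) = - 1"
    then have "sin a * E = - (sin a * \<rho> t)\<^sup>2"
      using sin_mult_branch_energy[of a "\<theta> t" "\<rho> t"] energy[of t] by simp
    with \<open>0 < sin a * E\<close> show False
      using zero_le_power2[of "sin a * \<rho> t"] by linarith
  qed
  then obtain m :: int
    where "\<And>t. - (pi / 2) < \<theta> t - 2 * pi * of_int m \<and> \<theta> t - 2 * pi * of_int m < 3 * pi / 2"
    using exists_lift_between_if_sin_ne_minus_one[OF branch_solution_continuous(1)[OF sol]] by blast
  then have "oval_orbit a E (\<lambda>t. \<theta> t - 2 * pi * of_int m) \<rho>"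
    using branch_solution_shift[OF sol, of 0 m] energy assms(3,4)
    by unfold_locales (simp_all add: branch_energy_def sin_diff)
  then have "periodic_on_cylinder (\<lambda>t. \<theta> t - 2 * pi * of_int m) \<rho>"
    by (rule oval_orbit.periodic)
  then show ?thesis
    unfolding periodic_on_cylinder_def by (auto simp: algebra_simps)
qed

theorem theorem2:
  fixes \<alpha> :: real and \<theta> \<rho> :: "real \<Rightarrow> real"
  assumes "sin \<alpha> \<noteq> 0"
    and "branch_solution \<alpha> \<theta> \<rho>"
  shows "(\<exists>c. \<forall>t. branch_energy \<alpha> (\<theta> t) (\<rho> t) = c) \<and> periodic_on_cylinder \<theta> \<rho>"
proof
  define E where "E = branch_energy \<alpha> (\<theta> 0) (\<rho> 0)"
  have energy: "\<And>t. branch_energy \<alpha> (\<theta> t) (\<rho> t) = E"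
    unfolding E_def using branch_energy_constant[OF assms(2)] .
  then show "\<exists>c. \<forall>t. branch_energy \<alpha> (\<theta> t) (\<rho> t) = c"
    by blast
  have "sin \<alpha> * E \<le> 1"
    unfolding E_def by (rule sin_mult_branch_energy_le_one[OF branch_solution_pos[OF assms(2)]])
  then consider "sin \<alpha> * E \<le> 0" | "0 < sin \<alpha> * E" "sin \<alpha> * E < 1" | "sin \<alpha> * E = 1"
    by linarith
  then show "periodic_on_cylinder \<theta> \<rho>"
  proof cases
    case 1
    with periodic_if_sin_mult_energy_nonpos[OF assms(2,1) energy] show ?thesis .
  next
    case 2
    with periodic_if_sin_mult_energy_between[OF assms(2) energy] show ?thesis .
  next
    case 3
    with periodic_if_sin_mult_energy_eq_one[OF assms(2) energy] show ?thesis .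
  qed
qed

end
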